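(* Let $n\ge 2$ be an integer that is a multiple of $3$. If the Aztec diamond $\operatorname{AD}(n-1)$ has a cover by L-trominoes, then $\operatorname{AD}(n+3)$ has a cover by L-trominoes.
   Context: A cell is a unit square $[i,i+1]\times[j,j+1]$ with $i,j\in\mathbb{Z}$. An L-tromino is a set of three cells equal to a $2\times 2$ block of cells with one cell removed. A cover of a region $R$ (a finite edge-connected set of cells) is a set of pairwise disjoint L-trominoes contained in $R$ whose union is $R$. The Aztec diamond $\operatorname{AD}(n)$ is the union of the cells $[a,a+1]\times[b,b+1]$, $a,b\in\mathbb{Z}$, lying completely inside $\{(x,y): |x|+|y|\le n+1\}$. *)

theory Defs
  imports Main
begin

text \<open>A cell [i,i+1] x [j,j+1] is represented by its lower-left corner (i,j).\<close>
type_synonym cell = "int \<times> int"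

definition block2 :: "int \<Rightarrow> int \<Rightarrow> cell set" where
  "block2 i j = {(i,j), (i+1,j), (i,j+1), (i+1,j+1)}"

definition L_tromino :: "cell set \<Rightarrow> bool" where
  "L_tromino T \<longleftrightarrow> (\<exists>i j c. c \<in> block2 i j \<and> T = block2 i j - {c})"

definition is_cover :: "cell set \<Rightarrow> cell set set \<Rightarrow> bool" where
  "is_cover R \<T> \<longleftrightarrow>
     (\<forall>T\<in>\<T>. L_tromino T \<and> T \<subseteq> R) \<and>
     (\<forall>T\<in>\<T>. \<forall>T'\<in>\<T>. T \<noteq> T' \<longrightarrow> T \<inter> T' = {}) \<and>
     \<Union>\<T> = R"

definition has_tromino_cover :: "cell set \<Rightarrow> bool" where
  "has_tromino_cover R \<longleftrightarrow> (\<exists>\<T>. is_cover R \<T>)"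

text \<open>The cell with corner (a,b) lies in {|x|+|y| \<le> m} iff all four of its corners do
  (the region is convex).\<close>
definition aztec_diamond :: "nat \<Rightarrow> cell set" where
  "aztec_diamond n = {(a,b). \<forall>x\<in>{a,a+1}. \<forall>y\<in>{b,b+1}. \<bar>x\<bar> + \<bar>y\<bar> \<le> int n + 1}"

end

theory Submission
  imports Defs
begin

text \<open>The cells of AD(K+4) outside AD(K) form four quarter-turn copies of the staircase
  band of cells (a,b) with a, b \<ge> 0 and K \<le> a + b \<le> K + 3.  For K \<equiv> 2 (mod 3) such a band
  is tiled: the band for K = 2 by six trominoes, and the band for K + 3 by the band for K
  shifted up by three together with four trominoes filling its three lowest rows.\<close>

lemma has_tromino_cover_L_tromino:
  assumes "c \<in> block2 i j"
  shows "has_tromino_cover (block2 i j - {c})"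
proof -
  have "L_tromino (block2 i j - {c})" using assms unfolding L_tromino_def by blast
  then have "is_cover (block2 i j - {c}) {block2 i j - {c}}" by (auto simp: is_cover_def)
  then show ?thesis by (auto simp: has_tromino_cover_def)
qed

lemma has_tromino_cover_Un:
  assumes "has_tromino_cover A" "has_tromino_cover B" "A \<inter> B = {}"
  shows "has_tromino_cover (A \<union> B)"
proof -
  obtain S S' where S: "is_cover A S" and S': "is_cover B S'"
    using assms(1,2) by (auto simp: has_tromino_cover_def)
  have cross: "T \<inter> T' = {}" if "T \<in> S" "T' \<in> S'" for T T'
    using that S S' assms(3) unfolding is_cover_def by blast
  have "\<forall>T\<in>S \<union> S'. \<forall>T'\<in>S \<union> S'. T \<noteq> T' \<longrightarrow> T \<inter> T' = {}"
    using S S' cross unfolding is_cover_def by (metis Int_commute UnE)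
  then have "is_cover (A \<union> B) (S \<union> S')"
    using S S' unfolding is_cover_def by auto
  then show ?thesis by (auto simp: has_tromino_cover_def)
qed

lemma L_tromino_image:
  assumes "inj f" and blocks: "\<And>i j. \<exists>i' j'. f ` block2 i j = block2 i' j'"
    and "L_tromino T"
  shows "L_tromino (f ` T)"
proof -
  obtain i j c where c: "c \<in> block2 i j" and T: "T = block2 i j - {c}"
    using \<open>L_tromino T\<close> unfolding L_tromino_def by blast
  obtain i' j' where f: "f ` block2 i j = block2 i' j'" using blocks by blast
  have "f ` T = block2 i' j' - {f c}" using T f \<open>inj f\<close> by (simp add: image_set_diff)
  moreover have "f c \<in> block2 i' j'" using f c by blast
  ultimately show ?thesis unfolding L_tromino_def by blast
qed

lemma has_tromino_cover_image:
  assumes "inj f" and "\<And>i j. \<exists>i' j'. f ` block2 i j = block2 i' j'"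
    and "has_tromino_cover A"
  shows "has_tromino_cover (f ` A)"
proof -
  obtain S where S: "is_cover A S" using assms(3) by (auto simp: has_tromino_cover_def)
  have "f ` U \<inter> f ` U' = {}" if "U \<in> S" "U' \<in> S" "f ` U \<noteq> f ` U'" for U U'
  proof -
    have "U \<inter> U' = {}" using that S unfolding is_cover_def by blast
    then show ?thesis using \<open>inj f\<close> by (simp add: image_Int[symmetric])
  qed
  moreover have "L_tromino (f ` U) \<and> f ` U \<subseteq> f ` A" if "U \<in> S" for U
    using that S L_tromino_image[OF assms(1,2)] unfolding is_cover_def by blast
  moreover have "\<Union> (image f ` S) = f ` A"
    using S unfolding is_cover_def by blast
  ultimately have "is_cover (f ` A) (image f ` S)"
    unfolding is_cover_def by blast
  then show ?thesis by (auto simp: has_tromino_cover_def)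
qed

definition quadrant_band :: "int \<Rightarrow> cell set" where
  "quadrant_band k = {(a,b). 0 \<le> a \<and> 0 \<le> b \<and> k \<le> a + b \<and> a + b \<le> k + 3}"

definition translate :: "int \<Rightarrow> int \<Rightarrow> cell \<Rightarrow> cell" where
  "translate u v = (\<lambda>(a,b). (a + u, b + v))"

text \<open>The quarter turn of the plane about the origin, acting on lower-left corners.\<close>
definition rot90 :: "cell \<Rightarrow> cell" where
  "rot90 = (\<lambda>(a,b). (- b - 1, a))"

lemma inj_translate: "inj (translate u v)"
  by (auto simp: inj_def translate_def)

lemma translate_block2: "translate u v ` block2 i j = block2 (i + u) (j + v)"
  by (auto simp: block2_def translate_def)

lemma inj_rot90: "inj rot90"
  by (auto simp: inj_def rot90_def)

lemma rot90_block2: "rot90 ` block2 i j = block2 (- j - 2) i"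
  by (auto simp: block2_def rot90_def)

lemma mem_rot90_image: "(a,b) \<in> rot90 ` A \<longleftrightarrow> (b, - a - 1) \<in> A"
  by (force simp: rot90_def)

lemma mem_translate_image: "(a,b) \<in> translate u v ` A \<longleftrightarrow> (a - u, b - v) \<in> A"
  by (force simp: translate_def)

lemma quadrant_band_2:
  "quadrant_band 2 =
     (block2 2 0 - {(2,1)}) \<union> (block2 4 0 - {(5,1)}) \<union> (block2 1 1 - {(2,2)}) \<union>
     (block2 0 2 - {(1,2)}) \<union> (block2 2 2 - {(3,3)}) \<union> (block2 0 4 - {(1,5)})"
    (is "_ = ?tiles")
proof (intro set_eqI iffI)
  fix p assume "p \<in> quadrant_band 2"
  then obtain a b where p: "p = (a,b)" and ab: "0 \<le> a" "0 \<le> b" "2 \<le> a + b" "a + b \<le> 5"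
    by (auto simp: quadrant_band_def)
  have "a \<in> {0,1,2,3,4,5}" "b \<in> {0,1,2,3,4,5}" using ab by auto
  then show "p \<in> ?tiles" using ab unfolding p
    by (elim insertE emptyE; simp add: block2_def)
qed (auto simp: block2_def quadrant_band_def)

lemma quadrant_band_add3:
  assumes "k \<ge> 0"
  shows "quadrant_band (k + 3) =
     (block2 (k+5) 0 - {(k+6,1)}) \<union> (block2 (k+3) 0 - {(k+3,1)}) \<union>
     (block2 (k+3) 1 - {(k+4,1)}) \<union> (block2 (k+1) 1 - {(k+1,1)}) \<union>
     translate 0 3 ` quadrant_band k"
    (is "_ = ?tiles \<union> _")
proof (intro set_eqI iffI)
  fix p assume "p \<in> quadrant_band (k + 3)"
  then obtain a b where p: "p = (a,b)" and ab: "0 \<le> a" "0 \<le> b" "k + 3 \<le> a + b" "a + b \<le> k + 6"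
    by (auto simp: quadrant_band_def)
  show "p \<in> ?tiles \<union> translate 0 3 ` quadrant_band k"
  proof (cases "b \<ge> 3")
    case True
    then show ?thesis using ab unfolding p by (simp add: mem_translate_image quadrant_band_def)
  next
    case False
    then have "b \<in> {0,1,2}" "a - k + b \<in> {3,4,5,6}" using ab by auto
    then have "p \<in> ?tiles" using ab unfolding p
      by (elim insertE emptyE; simp add: block2_def; arith)
    then show ?thesis by blast
  qed
qed (use assms in \<open>auto simp: block2_def quadrant_band_def translate_def\<close>)

lemma has_tromino_cover_quadrant_band_add3:
  assumes "k \<ge> 0" and "has_tromino_cover (quadrant_band k)"
  shows "has_tromino_cover (quadrant_band (k + 3))"
proof -
  have "has_tromino_cover (translate 0 3 ` quadrant_band k)"
    using assms(2) by (intro has_tromino_cover_image inj_translate) (auto simp: translate_block2)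
  then show ?thesis
    unfolding quadrant_band_add3[OF assms(1)]
    by (intro has_tromino_cover_Un has_tromino_cover_L_tromino)
      (use assms(1) in \<open>auto simp: block2_def translate_def quadrant_band_def\<close>)
qed

lemma has_tromino_cover_quadrant_band: "has_tromino_cover (quadrant_band (3 * int s + 2))"
proof (induction s)
  case 0
  show ?case
    unfolding of_nat_0 mult_zero_right add_0 quadrant_band_2
    by (intro has_tromino_cover_Un has_tromino_cover_L_tromino) (auto simp: block2_def)
next
  case (Suc s)
  then have "has_tromino_cover (quadrant_band (3 * int s + 2 + 3))"
    by (intro has_tromino_cover_quadrant_band_add3) auto
  then show ?case by (simp add: algebra_simps)
qed

lemma mem_aztec_diamond:
  "(a,b) \<in> aztec_diamond n \<longleftrightarrow>
     \<bar>a\<bar> + \<bar>b\<bar> \<le> int n + 1 \<and> \<bar>a + 1\<bar> + \<bar>b\<bar> \<le> int n + 1 \<and>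
     \<bar>a\<bar> + \<bar>b + 1\<bar> \<le> int n + 1 \<and> \<bar>a + 1\<bar> + \<bar>b + 1\<bar> \<le> int n + 1"
  by (auto simp: aztec_diamond_def)

definition aztec_frame :: "int \<Rightarrow> cell set" where
  "aztec_frame k = quadrant_band k \<union> rot90 ` quadrant_band k \<union>
     rot90 ` rot90 ` quadrant_band k \<union> rot90 ` rot90 ` rot90 ` quadrant_band k"

lemma disjointI_cells: "(\<And>a b. (a,b) \<in> A \<Longrightarrow> (a,b) \<notin> B) \<Longrightarrow> A \<inter> B = {}"
  by auto

lemma quadrant_band_rot90_disjoint:
  "quadrant_band k \<inter> rot90 ` quadrant_band k = {}"
  "(quadrant_band k \<union> rot90 ` quadrant_band k) \<inter> rot90 ` rot90 ` quadrant_band k = {}"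
  "(quadrant_band k \<union> rot90 ` quadrant_band k \<union> rot90 ` rot90 ` quadrant_band k) \<inter>
     rot90 ` rot90 ` rot90 ` quadrant_band k = {}"
  by (rule disjointI_cells; simp add: mem_rot90_image quadrant_band_def; arith)+

lemma has_tromino_cover_aztec_frame:
  assumes "has_tromino_cover (quadrant_band k)"
  shows "has_tromino_cover (aztec_frame k)"
proof -
  have rot90_blocks: "\<exists>i' j'. rot90 ` block2 i j = block2 i' j'" for i j
    unfolding rot90_block2 by blast
  show ?thesis
    unfolding aztec_frame_def
    by (intro has_tromino_cover_Un has_tromino_cover_image[OF inj_rot90 rot90_blocks]
        assms quadrant_band_rot90_disjoint)
qed

lemma aztec_diamond_add4:
  "aztec_diamond (K + 4) = aztec_diamond K \<union> aztec_frame (int K)"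
proof (rule set_eqI)
  fix p :: cell
  show "p \<in> aztec_diamond (K + 4) \<longleftrightarrow> p \<in> aztec_diamond K \<union> aztec_frame (int K)"
    by (cases p) (simp add: aztec_frame_def mem_aztec_diamond mem_rot90_image quadrant_band_def, arith)
qed

lemma aztec_diamond_Int_aztec_frame: "aztec_diamond K \<inter> aztec_frame (int K) = {}"
  unfolding aztec_frame_def Int_Un_distrib
  by (intro Un_empty[THEN iffD2] conjI disjointI_cells;
      simp add: mem_aztec_diamond mem_rot90_image quadrant_band_def; arith)

lemma has_tromino_cover_aztec_diamond_add4:
  assumes "has_tromino_cover (aztec_diamond (3 * s + 2))"
  shows "has_tromino_cover (aztec_diamond (3 * s + 2 + 4))"
proof -
  have "has_tromino_cover (aztec_frame (3 * int s + 2))"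
    by (intro has_tromino_cover_aztec_frame has_tromino_cover_quadrant_band)
  then have "has_tromino_cover (aztec_frame (int (3 * s + 2)))"
    by (simp add: add.commute)
  then show ?thesis
    unfolding aztec_diamond_add4
    by (intro has_tromino_cover_Un assms aztec_diamond_Int_aztec_frame)
qed

theorem corollary3:
  fixes n :: nat
  assumes "n \<ge> 2" and "3 dvd n"
    and "has_tromino_cover (aztec_diamond (n - 1))"
  shows "has_tromino_cover (aztec_diamond (n + 3))"
proof -
  obtain k where "n = 3 * k" using assms(2) by (rule dvdE)
  with assms(1) obtain s where n: "n = 3 * s + 3" by (cases k) auto
  have "n - 1 = 3 * s + 2" "n + 3 = 3 * s + 2 + 4" unfolding n by simp_all
  then show ?thesis
    using has_tromino_cover_aztec_diamond_add4 assms(3) by metis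
qed

end
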